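(* Every weight of a semi-invariant of $S(\mathfrak q)$ lies in $\bigoplus_{k=1}^{s-1}\mathbb Z\,\varpi_{\iota_k}$; i.e. $\Lambda(\mathfrak q)\subset\bigoplus_{\iota\in\{\iota_0,\dots,\iota_s\}}\mathbb Z\varpi_\iota$.
   Context: Setup (parabolic contractions of $\mathfrak{gl}_n$). Let $\mathbb C$ be an algebraically closed field of characteristic $0$ and $n\ge 2$. Let $e_{p,q}$ be the elementary matrices of $\mathfrak{gl}_n$, $I=\{1,\dots,n\}$. Fix $0=\iota_0<\iota_1<\dots<\iota_s=n$, $s\ge2$; $I_k=\{\iota_{k-1}+1,\dots,\iota_k\}$, $k(x)$ the index with $x\in I_{k(x)}$. $\mathfrak p=\operatorname{span}\{e_{p,q}: k(p)\le k(q)\}$, $\mathfrak n^-=\operatorname{span}\{e_{p,q}: k(p)>k(q)\}$; $\mathfrak q=\mathfrak p\ltimes\mathfrak n^-$ is $\mathfrak{gl}_n$ with bracket $[p_1,p_2]=p_1p_2-p_2p_1$, $[p,x]=\pi_{\mathfrak n^-}(px-xp)$, $[x,y]=0$ ($p,p_i\in\mathfrak p$, $x,y\in\mathfrak n^-$, $\pi_{\mathfrak n^-}$ projection onto $\mathfrak n^-$ along $\mathfrak p$). The adjoint action extends to $S(\mathfrak q)$ by derivations; a semi-invariant is a nonzero $f$ with $x\cdot f=\lambda(x)f$ for all $x$, $\lambda\in\mathfrak q^*$ its weight; $\Lambda(\mathfrak q)$ is the set of weights of semi-invariants. For $1\le\ell\le n-1$, $\varpi_\ell\in\mathfrak q^*$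 vanishes on the off-diagonal $e_{p,q}$ and $\varpi_\ell(\sum_u a_ue_{u,u})=\sum_{u\le\ell}a_u-\frac{\ell}{n}\sum_ua_u$; $\varpi_0=\varpi_n=0$. *)

theory Defs
  imports "HOL-Library.Poly_Mapping" "HOL-Computational_Algebra.Polynomial"
begin

text \<open>Matrices of gl_n are functions nat => nat => 'a; only entries with indices in
  I = {1..n} matter. The symmetric algebra S(q) is the polynomial ring in the variables
  e_{p,q}, (p,q) in I x I, represented with Poly_Mapping.\<close>

type_synonym 'a mat = "nat \<Rightarrow> nat \<Rightarrow> 'a"
type_synonym 'a spoly = "((nat \<times> nat) \<Rightarrow>\<^sub>0 nat) \<Rightarrow>\<^sub>0 'a"

definition Iset :: "nat \<Rightarrow> nat set" where "Iset n = {1..n}"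

text \<open>Block index k(x): the k with iota(k-1) < x <= iota k.\<close>
definition blk :: "(nat \<Rightarrow> nat) \<Rightarrow> nat \<Rightarrow> nat" where
  "blk iota x = (LEAST k. x \<le> iota k)"

definition mat_mult :: "nat \<Rightarrow> 'a::comm_ring_1 mat \<Rightarrow> 'a mat \<Rightarrow> 'a mat" where
  "mat_mult n A B = (\<lambda>i j. \<Sum>k\<in>Iset n. A i k * B k j)"

definition commut :: "nat \<Rightarrow> 'a::comm_ring_1 mat \<Rightarrow> 'a mat \<Rightarrow> 'a mat" where
  "commut n A B = (\<lambda>i j. mat_mult n A B i j - mat_mult n B A i j)"

definition proj_p :: "(nat \<Rightarrow> nat) \<Rightarrow> 'a::zero mat \<Rightarrow> 'a mat" where
  "proj_p iota A = (\<lambda>i j. if blk iota i \<le> blk iota j then A i j else 0)"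

definition proj_n :: "(nat \<Rightarrow> nat) \<Rightarrow> 'a::zero mat \<Rightarrow> 'a mat" where
  "proj_n iota A = (\<lambda>i j. if blk iota i > blk iota j then A i j else 0)"

text \<open>Lie bracket of q = p \<ltimes> n^-\<close>
definition qbracket :: "nat \<Rightarrow> (nat \<Rightarrow> nat) \<Rightarrow> 'a::comm_ring_1 mat \<Rightarrow> 'a mat \<Rightarrow> 'a mat" where
  "qbracket n iota A B =
     (\<lambda>i j. commut n (proj_p iota A) (proj_p iota B) i j
          + proj_n iota (commut n (proj_p iota A) (proj_n iota B)) i j
          + proj_n iota (commut n (proj_n iota A) (proj_p iota B)) i j)"

definition elem :: "nat \<Rightarrow> nat \<Rightarrow> 'a::zero_neq_one mat" where
  "elem p q = (\<lambda>i j. if i = p \<and> j = q then 1 else 0)"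

definition lin :: "nat \<Rightarrow> 'a::comm_ring_1 mat \<Rightarrow> 'a spoly" where
  "lin n A = (\<Sum>u\<in>Iset n. \<Sum>v\<in>Iset n. Poly_Mapping.single (Poly_Mapping.single (u, v) 1) (A u v))"

definition pdiff :: "nat \<times> nat \<Rightarrow> 'a::comm_ring_1 spoly \<Rightarrow> 'a spoly" where
  "pdiff v f = (\<Sum>m\<in>Poly_Mapping.keys f. Poly_Mapping.single (m - Poly_Mapping.single v (1::nat))
                                  (of_nat (Poly_Mapping.lookup m v) * Poly_Mapping.lookup f m))"

text \<open>adjoint action of x in q on S(q), extended by derivations\<close>
definition act :: "nat \<Rightarrow> (nat \<Rightarrow> nat) \<Rightarrow> 'a::comm_ring_1 mat \<Rightarrow> 'a spoly \<Rightarrow> 'a spoly" where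
  "act n iota x f = (\<Sum>p\<in>Iset n. \<Sum>q\<in>Iset n. lin n (qbracket n iota x (elem p q)) * pdiff (p, q) f)"

definition in_Sq :: "nat \<Rightarrow> 'a::zero spoly \<Rightarrow> bool" where
  "in_Sq n f \<longleftrightarrow> (\<forall>m\<in>Poly_Mapping.keys f. Poly_Mapping.keys m \<subseteq> Iset n \<times> Iset n)"

definition semi_invariant :: "nat \<Rightarrow> (nat \<Rightarrow> nat) \<Rightarrow> 'a::comm_ring_1 spoly \<Rightarrow> ('a mat \<Rightarrow> 'a) \<Rightarrow> bool" where
  "semi_invariant n iota f lam \<longleftrightarrow> in_Sq n f \<and> f \<noteq> 0 \<and>
     (\<forall>x. act n iota x f = Poly_Mapping.single 0 (lam x) * f)"

definition weights :: "nat \<Rightarrow> (nat \<Rightarrow> nat) \<Rightarrow> ('a::comm_ring_1 mat \<Rightarrow> 'a) set" where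
  "weights n iota = {lam. \<exists>f. semi_invariant n iota f lam}"

definition varpi :: "nat \<Rightarrow> nat \<Rightarrow> 'a::field_char_0 mat \<Rightarrow> 'a" where
  "varpi n l x = (\<Sum>u\<in>{1..l}. x u u) - (of_nat l / of_nat n) * (\<Sum>u\<in>Iset n. x u u)"

end

theory Submission
  imports Defs "HOL-Library.Function_Algebras"
begin

text \<open>A weight \<open>\<lambda>\<close> of a semi-invariant vanishes on \<open>[q, q]\<close>, because the adjoint action
  on \<open>S(q)\<close> is a representation: the commutator of the derivations induced by \<open>x\<close> and \<open>y\<close> is
  the derivation induced by \<open>[x, y]\<close>, by the Jacobi identity of \<open>q\<close>. Hence \<open>\<lambda>\<close> kills the
  off-diagonal \<open>e\<^sub>p\<^sub>q = [e\<^sub>p\<^sub>p, e\<^sub>p\<^sub>q]\<close> and, for \<open>u\<close>, \<open>v\<close> in one block, \<open>e\<^sub>u\<^sub>u - e\<^sub>v\<^sub>v = [e\<^sub>u\<^sub>v, e\<^sub>v\<^sub>u]\<close>;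
  so \<open>\<lambda>(x) = \<Sum>\<^sub>u x\<^sub>u\<^sub>u \<mu>\<^sub>u\<close> with \<open>\<mu>\<close> constant on blocks. Comparing the coefficients of a
  monomial \<open>m\<close> of \<open>f\<close> in \<open>e\<^sub>u\<^sub>u \<cdot> f = \<lambda>(e\<^sub>u\<^sub>u) f\<close> shows that \<open>\<mu>\<^sub>u\<close> is the \<open>e\<^sub>u\<^sub>u\<close>-weight of \<open>m\<close>, an
  integer, and that \<open>\<Sum>\<^sub>u \<mu>\<^sub>u = 0\<close>. Abel summation then gives
  \<open>\<lambda> = \<Sum>\<^sub>l (\<mu>\<^sub>l - \<mu>\<^sub>l\<^sub>+\<^sub>1) \<varpi>\<^sub>l\<close>, in which only the block boundaries \<open>l = \<iota>\<^sub>k\<close> survive.\<close>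

section \<open>Polynomials and partial derivatives\<close>

lemma lookup_const_mult:
  "Poly_Mapping.lookup (Poly_Mapping.single 0 c * f) m = c * Poly_Mapping.lookup (f::'m::monoid_add \<Rightarrow>\<^sub>0 'a::semiring_0) m"
  by (simp flip: mult_map_scale_conv_mult add: Poly_Mapping.map.rep_eq when_def)

lemma const_mult_eq_0_iff:
  fixes f :: "'m::monoid_add \<Rightarrow>\<^sub>0 'a::semiring_no_zero_divisors"
  assumes "f \<noteq> 0"
  shows "Poly_Mapping.single 0 c * f = 0 \<longleftrightarrow> c = 0"
proof -
  from assms obtain m where "Poly_Mapping.lookup f m \<noteq> 0"
    by (metis poly_mapping_eqI lookup_zero)
  then show ?thesis
    by (metis lookup_const_mult lookup_zero mult_eq_0_iff single_zero mult_zero_left)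
qed

lemma poly_mapping_expansion:
  "f = (\<Sum>m\<in>Poly_Mapping.keys f. Poly_Mapping.single m (Poly_Mapping.lookup f m))"
proof (rule poly_mapping_eqI)
  fix k
  have "(\<Sum>m\<in>Poly_Mapping.keys f. Poly_Mapping.lookup (Poly_Mapping.single m (Poly_Mapping.lookup f m)) k)
      = (\<Sum>m\<in>Poly_Mapping.keys f. if m = k then Poly_Mapping.lookup f m else 0)"
    by (rule sum.cong) (auto simp: lookup_single when_def)
  then show "Poly_Mapping.lookup f k
      = Poly_Mapping.lookup (\<Sum>m\<in>Poly_Mapping.keys f. Poly_Mapping.single m (Poly_Mapping.lookup f m)) k"
    by (simp add: lookup_sum sum.delta' in_keys_iff)
qed

lemma mult_expansion:
  fixes f g :: "'m::monoid_add \<Rightarrow>\<^sub>0 'a::semiring_0"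
  shows "f * g = (\<Sum>a\<in>Poly_Mapping.keys f. \<Sum>b\<in>Poly_Mapping.keys g.
            Poly_Mapping.single a (Poly_Mapping.lookup f a) * Poly_Mapping.single b (Poly_Mapping.lookup g b))"
  by (subst poly_mapping_expansion[of f], subst poly_mapping_expansion[of g])
     (simp add: sum_distrib_left sum_distrib_right, rule sum.swap)

lemma pdiff_eq_sum_over:
  assumes "finite S" "Poly_Mapping.keys f \<subseteq> S"
  shows "pdiff v f = (\<Sum>m\<in>S. Poly_Mapping.single (m - Poly_Mapping.single v 1)
                                  (of_nat (Poly_Mapping.lookup m v) * Poly_Mapping.lookup f m))"
  unfolding pdiff_def
  by (rule sum.mono_neutral_left) (use assms in \<open>auto simp: in_keys_iff\<close>)

lemma pdiff_single:
  "pdiff v (Poly_Mapping.single m c)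
     = Poly_Mapping.single (m - Poly_Mapping.single v 1) (of_nat (Poly_Mapping.lookup m v) * c)"
  by (subst pdiff_eq_sum_over[of "{m}"]) auto

lemma pdiff_zero [simp]: "pdiff v 0 = 0"
  by (simp add: pdiff_def)

lemma pdiff_add: "pdiff v (f + g) = pdiff v f + pdiff v g"
proof -
  let ?S = "Poly_Mapping.keys f \<union> Poly_Mapping.keys g"
  show ?thesis
    by (simp add: pdiff_eq_sum_over[OF _ keys_add] pdiff_eq_sum_over[of ?S f]
        pdiff_eq_sum_over[of ?S g] lookup_add distrib_left single_add sum.distrib)
qed

lemma pdiff_sum: "pdiff v (\<Sum>i\<in>I. F i) = (\<Sum>i\<in>I. pdiff v (F i))"
  by (induction I rule: infinite_finite_induct) (auto simp: pdiff_add)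

lemma pdiff_const_mult:
  "pdiff v (Poly_Mapping.single 0 c * f) = Poly_Mapping.single 0 c * pdiff v f"
  by (subst (1 2) poly_mapping_expansion)
     (simp add: pdiff_sum pdiff_single sum_distrib_left mult_single mult.left_commute)

lemma pdiff_mult_single:
  "pdiff v (Poly_Mapping.single a x * Poly_Mapping.single b y)
     = pdiff v (Poly_Mapping.single a x) * Poly_Mapping.single b y
       + Poly_Mapping.single a x * pdiff v (Poly_Mapping.single b (y::'a::comm_ring_1))"
proof -
  have shift: "c + (d - Poly_Mapping.single v 1) = c + d - Poly_Mapping.single v 1"
    if "Poly_Mapping.lookup d v \<noteq> 0" for c d :: "(nat \<times> nat) \<Rightarrow>\<^sub>0 nat"
    using that by (auto intro!: poly_mapping_eqI simp: lookup_add lookup_minus lookup_single when_def)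
  show ?thesis
    by (cases "Poly_Mapping.lookup a v = 0"; cases "Poly_Mapping.lookup b v = 0")
       (simp_all add: pdiff_single mult_single shift[unfolded One_nat_def]
          shift[of b a, unfolded One_nat_def add.commute[of b a]] lookup_add algebra_simps flip: single_add)
qed

lemma pdiff_mult: "pdiff v (f * g) = pdiff v f * g + f * pdiff v (g::'a::comm_ring_1 spoly)"
proof -
  let ?mf = "\<lambda>a. Poly_Mapping.single a (Poly_Mapping.lookup f a)"
  let ?mg = "\<lambda>b. Poly_Mapping.single b (Poly_Mapping.lookup g b)"
  have "pdiff v (f * g) = (\<Sum>a\<in>Poly_Mapping.keys f. \<Sum>b\<in>Poly_Mapping.keys g.
          pdiff v (?mf a) * ?mg b + ?mf a * pdiff v (?mg b))"
    by (subst mult_expansion) (simp add: pdiff_sum pdiff_mult_single)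
  also have "\<dots> = pdiff v (\<Sum>a\<in>Poly_Mapping.keys f. ?mf a) * (\<Sum>b\<in>Poly_Mapping.keys g. ?mg b)
      + (\<Sum>a\<in>Poly_Mapping.keys f. ?mf a) * pdiff v (\<Sum>b\<in>Poly_Mapping.keys g. ?mg b)"
    by (simp add: sum.distrib pdiff_sum sum_distrib_left sum_distrib_right
        sum.swap[where B="Poly_Mapping.keys g"])
  finally show ?thesis
    by (simp flip: poly_mapping_expansion)
qed

lemma pdiff_commute: "pdiff v (pdiff w f) = pdiff w (pdiff v (f::'a::comm_ring_1 spoly))"
proof -
  have "pdiff v (pdiff w (Poly_Mapping.single m c)) = pdiff w (pdiff v (Poly_Mapping.single m c))"
    for m and c :: 'a
  proof (cases "v = w")
    case False
    have "m - Poly_Mapping.single w 1 - Poly_Mapping.single v 1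
        = m - Poly_Mapping.single v 1 - Poly_Mapping.single w 1"
      by (intro poly_mapping_eqI) (simp add: lookup_minus)
    with False show ?thesis
      by (simp add: pdiff_single lookup_minus lookup_single mult.left_commute)
  qed simp
  then show ?thesis
    by (subst (1 2) poly_mapping_expansion) (simp add: pdiff_sum)
qed

lemma lookup_var_mult_pdiff:
  "Poly_Mapping.lookup (Poly_Mapping.single (Poly_Mapping.single a 1) 1 * pdiff a f) m
     = of_nat (Poly_Mapping.lookup m a) * Poly_Mapping.lookup (f::'a::comm_ring_1 spoly) m"
proof -
  have "Poly_Mapping.single (Poly_Mapping.single a 1) 1 * pdiff a f
     = (\<Sum>m\<in>Poly_Mapping.keys f. Poly_Mapping.single m (of_nat (Poly_Mapping.lookup m a) * Poly_Mapping.lookup f m))"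
    unfolding pdiff_def sum_distrib_left
  proof (rule sum.cong[OF refl])
    fix m
    show "Poly_Mapping.single (Poly_Mapping.single a 1) 1 *
          Poly_Mapping.single (m - Poly_Mapping.single a 1) (of_nat (Poly_Mapping.lookup m a) * Poly_Mapping.lookup f m) =
          Poly_Mapping.single m (of_nat (Poly_Mapping.lookup m a) * Poly_Mapping.lookup f m)"
    proof (cases "Poly_Mapping.lookup m a = 0")
      case False
      then have "Poly_Mapping.single a 1 + (m - Poly_Mapping.single a 1) = m"
        by (intro poly_mapping_eqI) (auto simp: lookup_add lookup_minus lookup_single when_def)
      then show ?thesis
        by (simp add: mult_single)
    qed simp
  qed
  then show ?thesis
    by (simp add: lookup_sum lookup_single when_def sum.delta' in_keys_iff)
qed

definition vfield :: "(nat \<times> nat) set \<Rightarrow> (nat \<times> nat \<Rightarrow> 'a::comm_ring_1 spoly) \<Rightarrow> 'a spoly \<Rightarrow> 'a spoly" where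
  "vfield A g f = (\<Sum>a\<in>A. g a * pdiff a f)"

lemma vfield_const_mult:
  "vfield A g (Poly_Mapping.single 0 c * f) = Poly_Mapping.single 0 c * vfield A g f"
  by (simp add: vfield_def pdiff_const_mult sum_distrib_left mult.left_commute)

lemma vfield_coeff_add: "vfield A (\<lambda>a. g a + h a) f = vfield A g f + vfield A h f"
  by (simp add: vfield_def distrib_right sum.distrib)

lemma vfield_commutator:
  "vfield A g (vfield A h f) - vfield A h (vfield A g f)
     = vfield A (\<lambda>a. vfield A g (h a) - vfield A h (g a)) f"
proof -
  have expand: "vfield A g (vfield A h f)
      = (\<Sum>b\<in>A. \<Sum>a\<in>A. g b * pdiff b (h a) * pdiff a f)
        + (\<Sum>b\<in>A. \<Sum>a\<in>A. g b * h a * pdiff b (pdiff a f))" for g h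
    by (simp add: vfield_def pdiff_sum pdiff_mult sum_distrib_left distrib_left sum.distrib mult.assoc)
  have second_order_symmetric:
    "(\<Sum>b\<in>A. \<Sum>a\<in>A. h b * g a * pdiff b (pdiff a f)) = (\<Sum>b\<in>A. \<Sum>a\<in>A. g b * h a * pdiff b (pdiff a f))"
    by (subst sum.swap) (simp add: pdiff_commute mult.commute)
  have "vfield A (\<lambda>a. vfield A g (h a) - vfield A h (g a)) f
      = (\<Sum>b\<in>A. \<Sum>a\<in>A. g b * pdiff b (h a) * pdiff a f) - (\<Sum>b\<in>A. \<Sum>a\<in>A. h b * pdiff b (g a) * pdiff a f)"
    unfolding vfield_def
    by (simp add: left_diff_distrib sum_distrib_right sum_subtractf mult.assoc)
       (subst (1 2) sum.swap, simp add: mult.assoc)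
  then show ?thesis
    by (simp add: expand second_order_symmetric)
qed

section \<open>The Lie algebra \<open>q\<close>\<close>

lemma finite_Iset [simp]: "finite (Iset n)"
  by (simp add: Iset_def)

definition mat_smult :: "'a::comm_ring_1 \<Rightarrow> 'a mat \<Rightarrow> 'a mat" where
  "mat_smult c A = (\<lambda>i j. c * A i j)"

lemma sum_apply: "(\<Sum>b\<in>S. F b) x = (\<Sum>b\<in>S. F b x)"
  by (induction S rule: infinite_finite_induct) auto

lemma mat_smult_add: "mat_smult c (A + B) = mat_smult c A + mat_smult c (B::'a::comm_ring_1 mat)"
  by (simp add: mat_smult_def fun_eq_iff distrib_left)

context
  fixes n :: nat and iota :: "nat \<Rightarrow> nat"
begin

lemma mat_mult_add_left: "mat_mult n (A + B) C = mat_mult n A C + mat_mult n B (C::'a::comm_ring_1 mat)"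
  by (simp add: mat_mult_def fun_eq_iff distrib_right sum.distrib)

lemma mat_mult_add_right: "mat_mult n C (A + B) = mat_mult n C A + mat_mult n C (B::'a::comm_ring_1 mat)"
  by (simp add: mat_mult_def fun_eq_iff distrib_left sum.distrib)

lemma mat_mult_diff_left: "mat_mult n (A - B) C = mat_mult n A C - mat_mult n B (C::'a::comm_ring_1 mat)"
  by (simp add: mat_mult_def fun_eq_iff left_diff_distrib sum_subtractf)

lemma mat_mult_diff_right: "mat_mult n C (A - B) = mat_mult n C A - mat_mult n C (B::'a::comm_ring_1 mat)"
  by (simp add: mat_mult_def fun_eq_iff right_diff_distrib sum_subtractf)

lemma mat_mult_assoc: "mat_mult n (mat_mult n A B) C = mat_mult n A (mat_mult n B (C::'a::comm_ring_1 mat))"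
  unfolding mat_mult_def fun_eq_iff
  by (auto simp: sum_distrib_left sum_distrib_right mult.assoc intro: sum.swap)

lemma commut_eq: "commut n A B = mat_mult n A B - mat_mult n B (A::'a::comm_ring_1 mat)"
  by (simp add: commut_def fun_eq_iff)

lemma commut_add_left: "commut n (A + B) C = commut n A C + commut n B (C::'a::comm_ring_1 mat)"
  by (simp add: commut_eq mat_mult_add_left mat_mult_add_right)

lemma commut_add_right: "commut n C (A + B) = commut n C A + commut n C (B::'a::comm_ring_1 mat)"
  by (simp add: commut_eq mat_mult_add_left mat_mult_add_right)

lemma commut_smult_left: "commut n (mat_smult c A) B = mat_smult c (commut n A (B::'a::comm_ring_1 mat))"
  by (simp add: mat_smult_def commut_def mat_mult_def fun_eq_iff sum_distrib_left algebra_simps)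

lemma commut_smult_right: "commut n B (mat_smult c A) = mat_smult c (commut n B (A::'a::comm_ring_1 mat))"
  by (simp add: mat_smult_def commut_def mat_mult_def fun_eq_iff sum_distrib_left algebra_simps)

lemma commut_jacobi:
  "commut n A (commut n B C) = commut n (commut n A B) C + commut n B (commut n A (C::'a::comm_ring_1 mat))"
  by (simp add: commut_eq mat_mult_diff_left mat_mult_diff_right mat_mult_assoc)


lemma proj_p_add_proj_n: "proj_p iota A + proj_n iota A = (A::'a::comm_ring_1 mat)"
  by (simp add: proj_p_def proj_n_def fun_eq_iff)

lemma proj_p_add: "proj_p iota (A + B) = proj_p iota A + proj_p iota (B::'a::comm_ring_1 mat)"
  by (simp add: proj_p_def fun_eq_iff)

lemma proj_n_add: "proj_n iota (A + B) = proj_n iota A + proj_n iota (B::'a::comm_ring_1 mat)"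
  by (simp add: proj_n_def fun_eq_iff)

lemma proj_p_diff: "proj_p iota (A - B) = proj_p iota A - proj_p iota (B::'a::comm_ring_1 mat)"
  by (simp add: proj_p_def fun_eq_iff)

lemma proj_n_diff: "proj_n iota (A - B) = proj_n iota A - proj_n iota (B::'a::comm_ring_1 mat)"
  by (simp add: proj_n_def fun_eq_iff)

lemma proj_p_smult: "proj_p iota (mat_smult c A) = mat_smult c (proj_p iota (A::'a::comm_ring_1 mat))"
  by (simp add: mat_smult_def proj_p_def fun_eq_iff)

lemma proj_n_smult: "proj_n iota (mat_smult c A) = mat_smult c (proj_n iota (A::'a::comm_ring_1 mat))"
  by (simp add: mat_smult_def proj_n_def fun_eq_iff)

lemma proj_n_proj_n [simp]: "proj_n iota (proj_n iota A) = proj_n iota (A::'a::comm_ring_1 mat)"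
  by (simp add: proj_n_def fun_eq_iff)

lemma proj_p_proj_n [simp]: "proj_p iota (proj_n iota A) = (0::'a::comm_ring_1 mat)"
  by (simp add: proj_n_def proj_p_def fun_eq_iff)

lemma proj_n_mat_mult_proj_p: "proj_n iota (mat_mult n (proj_p iota A) (proj_p iota B)) = (0::'a::comm_ring_1 mat)"
  unfolding fun_eq_iff proj_n_def mat_mult_def
  by (auto intro!: sum.neutral simp: proj_p_def)

lemma proj_n_commut_proj_p: "proj_n iota (commut n (proj_p iota A) (proj_p iota B)) = (0::'a::comm_ring_1 mat)"
  by (simp add: commut_eq proj_n_diff proj_n_mat_mult_proj_p)

lemma proj_p_commut_proj_p:
  "proj_p iota (commut n (proj_p iota A) (proj_p iota B)) = commut n (proj_p iota A) (proj_p iota (B::'a::comm_ring_1 mat))"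
  by (metis proj_p_add_proj_n proj_n_commut_proj_p add.right_neutral)

lemma proj_n_commut_proj_p_left:
  "proj_n iota (commut n (proj_p iota A) (proj_n iota B)) = proj_n iota (commut n (proj_p iota A) (B::'a::comm_ring_1 mat))"
  by (metis proj_p_add_proj_n commut_add_right proj_n_add proj_n_commut_proj_p add_0)

lemma proj_n_commut_proj_p_right:
  "proj_n iota (commut n (proj_n iota B) (proj_p iota A)) = proj_n iota (commut n B (proj_p iota (A::'a::comm_ring_1 mat)))"
  by (metis proj_p_add_proj_n commut_add_left proj_n_add proj_n_commut_proj_p add_0)

lemma qbracket_eq:
  "qbracket n iota x y = commut n (proj_p iota x) (proj_p iota y)
     + proj_n iota (commut n (proj_p iota x) (proj_n iota y))
     + proj_n iota (commut n (proj_n iota x) (proj_p iota (y::'a::comm_ring_1 mat)))"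
  by (simp add: qbracket_def fun_eq_iff)

lemma proj_p_qbracket: "proj_p iota (qbracket n iota x y) = commut n (proj_p iota x) (proj_p iota (y::'a::comm_ring_1 mat))"
  by (simp add: qbracket_eq proj_p_add proj_p_commut_proj_p)

lemma proj_n_qbracket:
  "proj_n iota (qbracket n iota x y)
     = proj_n iota (commut n (proj_p iota x) y) + proj_n iota (commut n x (proj_p iota (y::'a::comm_ring_1 mat)))"
  by (simp add: qbracket_eq proj_n_add proj_n_commut_proj_p proj_n_commut_proj_p_left proj_n_commut_proj_p_right)

lemma proj_n_qbracket_qbracket_right:
  "proj_n iota (qbracket n iota x (qbracket n iota y z)) =
     proj_n iota (commut n (proj_p iota x) (commut n (proj_p iota y) z))
   + proj_n iota (commut n (proj_p iota x) (commut n y (proj_p iota z)))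
   + proj_n iota (commut n x (commut n (proj_p iota y) (proj_p iota (z::'a::comm_ring_1 mat))))"
proof -
  let ?w = "qbracket n iota y z"
  have "proj_n iota (commut n (proj_p iota x) ?w) = proj_n iota (commut n (proj_p iota x) (proj_n iota ?w))"
    by (rule proj_n_commut_proj_p_left[symmetric])
  also have "\<dots> = proj_n iota (commut n (proj_p iota x) (commut n (proj_p iota y) z))
      + proj_n iota (commut n (proj_p iota x) (commut n y (proj_p iota z)))"
    by (simp add: proj_n_qbracket commut_add_right proj_n_add proj_n_commut_proj_p_left)
  finally show ?thesis
    by (simp add: proj_n_qbracket proj_p_qbracket)
qed

lemma proj_n_qbracket_qbracket_left:
  "proj_n iota (qbracket n iota (qbracket n iota x y) z) =
     proj_n iota (commut n (commut n (proj_p iota x) (proj_p iota y)) z)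
   + proj_n iota (commut n (commut n (proj_p iota x) y) (proj_p iota z))
   + proj_n iota (commut n (commut n x (proj_p iota y)) (proj_p iota (z::'a::comm_ring_1 mat)))"
proof -
  let ?u = "qbracket n iota x y"
  have "proj_n iota (commut n ?u (proj_p iota z)) = proj_n iota (commut n (proj_n iota ?u) (proj_p iota z))"
    by (rule proj_n_commut_proj_p_right[symmetric])
  also have "\<dots> = proj_n iota (commut n (commut n (proj_p iota x) y) (proj_p iota z))
      + proj_n iota (commut n (commut n x (proj_p iota y)) (proj_p iota z))"
    by (simp add: proj_n_qbracket commut_add_left proj_n_add proj_n_commut_proj_p_right)
  finally show ?thesis
    by (simp add: proj_n_qbracket proj_p_qbracket add.assoc)
qed

text \<open>Jacobi identity for \<open>q\<close>, checked separately on the \<open>p\<close>- and the \<open>n\<^sup>-\<close>-components,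
  where it reduces to the Jacobi identity of \<open>gl\<^sub>n\<close>.\<close>

lemma qbracket_jacobi:
  "qbracket n iota x (qbracket n iota y z) - qbracket n iota y (qbracket n iota x z)
     = qbracket n iota (qbracket n iota x y) (z::'a::comm_ring_1 mat)"
  (is "?L = ?R")
proof -
  have jacobi_n: "proj_n iota (commut n A (commut n B C))
      = proj_n iota (commut n (commut n A B) C) + proj_n iota (commut n B (commut n A C))" for A B C :: "'a mat"
    by (simp only: commut_jacobi[of A B C] proj_n_add)
  have "proj_p iota ?L = proj_p iota ?R"
    by (simp add: proj_p_diff proj_p_qbracket commut_jacobi[of "proj_p iota x" "proj_p iota y" "proj_p iota z"])
  moreover have "proj_n iota ?L = proj_n iota ?R"
    unfolding proj_n_diff proj_n_qbracket_qbracket_right proj_n_qbracket_qbracket_left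
      jacobi_n[of "proj_p iota x" "proj_p iota y" z] jacobi_n[of "proj_p iota x" y "proj_p iota z"]
      jacobi_n[of x "proj_p iota y" "proj_p iota z"]
    by (simp add: algebra_simps)
  ultimately show ?thesis
    by (metis proj_p_add_proj_n)
qed


lemma qbracket_add_left: "qbracket n iota (x + y) z = qbracket n iota x z + qbracket n iota y (z::'a::comm_ring_1 mat)"
  by (simp add: qbracket_eq proj_p_add proj_n_add commut_add_left commut_add_right)

lemma qbracket_add_right: "qbracket n iota z (x + y) = qbracket n iota z x + qbracket n iota z (y::'a::comm_ring_1 mat)"
  by (simp add: qbracket_eq proj_p_add proj_n_add commut_add_left commut_add_right)

lemma qbracket_smult_left: "qbracket n iota (mat_smult c x) z = mat_smult c (qbracket n iota x (z::'a::comm_ring_1 mat))"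
  by (simp add: qbracket_eq proj_p_smult proj_n_smult commut_smult_left mat_smult_add)

lemma qbracket_smult_right: "qbracket n iota z (mat_smult c x) = mat_smult c (qbracket n iota z (x::'a::comm_ring_1 mat))"
  by (simp add: qbracket_eq proj_p_smult proj_n_smult commut_smult_right mat_smult_add)

lemma qbracket_zero_right: "qbracket n iota z 0 = (0::'a::comm_ring_1 mat)"
  by (simp add: qbracket_def commut_def mat_mult_def proj_p_def proj_n_def fun_eq_iff zero_fun_def)

lemma qbracket_sum_right: "qbracket n iota z (\<Sum>b\<in>S. F b) = (\<Sum>b\<in>S. qbracket n iota z (F b::'a::comm_ring_1 mat))"
  by (induction S rule: infinite_finite_induct)
     (simp_all add: qbracket_zero_right qbracket_add_right del: plus_fun_apply zero_fun_apply)

text \<open>Entries outside \<open>Iset n \<times> Iset n\<close> are junk: no operation depends on them.\<close>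

lemma qbracket_cong:
  fixes A A' B B' :: "'a::comm_ring_1 mat"
  assumes "\<And>i j. i \<in> Iset n \<Longrightarrow> j \<in> Iset n \<Longrightarrow> A i j = A' i j \<and> B i j = B' i j"
    and "i \<in> Iset n" "j \<in> Iset n"
  shows "qbracket n iota A B i j = qbracket n iota A' B' i j"
proof -
  have mult: "mat_mult n X Y i j = mat_mult n X' Y' i j"
    if "\<And>k. k \<in> Iset n \<Longrightarrow> X i k = X' i k \<and> Y k j = Y' k j" for X Y X' Y' :: "'a mat"
    unfolding mat_mult_def using that by (intro sum.cong) auto
  show ?thesis
    unfolding qbracket_def commut_def proj_n_def
    by (intro arg_cong2[where f="(+)"] arg_cong2[where f="(-)"] if_cong refl mult conjI)
       (auto simp: assms proj_p_def proj_n_def commut_def intro!: mult)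
qed

end

lemma mat_mult_elem_left:
  "mat_mult n (elem a b) B i j = (if i = a \<and> b \<in> Iset n then B b j else (0::'a::comm_ring_1))"
proof -
  have "mat_mult n (elem a b) B i j = (\<Sum>k\<in>Iset n. if k = b then (if i = a then B k j else 0) else 0)"
    unfolding mat_mult_def elem_def by (intro sum.cong) auto
  then show ?thesis
    by (simp add: sum.delta)
qed

lemma mat_mult_elem_right:
  "mat_mult n B (elem a b) i j = (if j = b \<and> a \<in> Iset n then B i a else (0::'a::comm_ring_1))"
proof -
  have "mat_mult n B (elem a b) i j = (\<Sum>k\<in>Iset n. if k = a then (if j = b then B i k else 0) else 0)"
    unfolding mat_mult_def elem_def by (intro sum.cong) auto
  then show ?thesis
    by (simp add: sum.delta)
qed

lemma proj_p_elem: "proj_p iota (elem a b) = (if blk iota a \<le> blk iota b then elem a b else (0::'a::comm_ring_1 mat))"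
  by (auto simp: proj_p_def elem_def fun_eq_iff)

lemma proj_n_elem: "proj_n iota (elem a b) = (if blk iota a > blk iota b then elem a b else (0::'a::comm_ring_1 mat))"
  by (auto simp: proj_n_def elem_def fun_eq_iff)

lemma mat_mult_zero_left [simp]: "mat_mult n 0 B = (0::'a::comm_ring_1 mat)"
  by (simp add: mat_mult_def fun_eq_iff)

lemma mat_mult_zero_right [simp]: "mat_mult n B 0 = (0::'a::comm_ring_1 mat)"
  by (simp add: mat_mult_def fun_eq_iff)

lemma proj_n_apply: "proj_n iota A i j = (if blk iota i > blk iota j then A i j else (0::'a::zero))"
  by (simp add: proj_n_def)

lemma qbracket_elem_elem:
  "qbracket n iota (elem a b) (elem p q) i j =
    (if blk iota a \<le> blk iota b \<and> blk iota p \<le> blk iota q then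
        mat_mult n (elem a b) (elem p q) i j - mat_mult n (elem p q) (elem a b) i j
     else if (blk iota a \<le> blk iota b \<or> blk iota p \<le> blk iota q) \<and> blk iota i > blk iota j then
        mat_mult n (elem a b) (elem p q) i j - mat_mult n (elem p q) (elem a b) i j
     else (0::'a::comm_ring_1))"
  by (simp add: qbracket_def commut_def proj_n_apply proj_p_elem proj_n_elem)

lemma qbracket_diag_elem:
  assumes "p \<in> Iset n" "q \<in> Iset n" "u \<in> Iset n"
  shows "qbracket n iota (elem u u) (elem p q) i j = (of_bool (u = p) - of_bool (u = q)) * (elem p q i j::'a::comm_ring_1)"
  unfolding qbracket_elem_elem mat_mult_elem_left mat_mult_elem_right using assms by (auto simp: elem_def)

lemma qbracket_elem_elem_swap:
  assumes "u \<noteq> v" "u \<in> Iset n" "v \<in> Iset n" "blk iota u = blk iota v"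
  shows "qbracket n iota (elem u v) (elem v u) i j = (elem u u i j - elem v v i j::'a::comm_ring_1)"
  unfolding qbracket_elem_elem mat_mult_elem_left mat_mult_elem_right using assms by (auto simp: elem_def)

section \<open>The action of \<open>q\<close> on \<open>S(q)\<close>\<close>

lemma lin_add: "lin n (A + B) = lin n A + lin n (B::'a::comm_ring_1 mat)"
  by (simp add: lin_def single_add sum.distrib)

lemma lin_diff: "lin n (A - B) = lin n A - lin n (B::'a::comm_ring_1 mat)"
  by (simp add: lin_def single_diff sum_subtractf)

lemma lin_smult: "lin n (mat_smult c A) = Poly_Mapping.single 0 c * lin n (A::'a::comm_ring_1 mat)"
  by (simp add: lin_def mat_smult_def sum_distrib_left mult_single)

lemma lin_zero [simp]: "lin n 0 = (0::'a::comm_ring_1 spoly)"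
  by (simp add: lin_def)

lemma lin_sum: "lin n (\<Sum>b\<in>S. F b) = (\<Sum>b\<in>S. lin n (F b::'a::comm_ring_1 mat))"
  by (induction S rule: infinite_finite_induct) (simp_all add: lin_add del: plus_fun_apply zero_fun_apply)

lemma lin_cong:
  assumes "\<And>i j. i \<in> Iset n \<Longrightarrow> j \<in> Iset n \<Longrightarrow> A i j = B i j"
  shows "lin n A = lin n (B::'a::comm_ring_1 mat)"
  using assms by (simp add: lin_def)

lemma lin_eq_sum_Times:
  "lin n A = (\<Sum>a\<in>Iset n \<times> Iset n. Poly_Mapping.single (Poly_Mapping.single a 1) (A (fst a) (snd a)))"
  by (simp add: lin_def sum.cartesian_product case_prod_beta)

lemma lin_elem:
  assumes "p \<in> Iset n" "q \<in> Iset n"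
  shows "lin n (elem p q) = Poly_Mapping.single (Poly_Mapping.single (p, q) 1) (1::'a::comm_ring_1)"
proof -
  have "lin n (elem p q) = (\<Sum>a\<in>Iset n \<times> Iset n.
      if a = (p, q) then Poly_Mapping.single (Poly_Mapping.single (p, q) 1) (1::'a) else 0)"
    unfolding lin_eq_sum_Times by (intro sum.cong refl) (auto simp: elem_def)
  with assms show ?thesis
    by (simp add: sum.delta')
qed

lemma pdiff_lin:
  assumes "b \<in> Iset n \<times> Iset n"
  shows "pdiff b (lin n (M::'a::comm_ring_1 mat)) = Poly_Mapping.single 0 (M (fst b) (snd b))"
proof -
  have "pdiff b (lin n M) = (\<Sum>a\<in>Iset n \<times> Iset n. if a = b then Poly_Mapping.single 0 (M (fst a) (snd a)) else 0)"
    unfolding lin_eq_sum_Times pdiff_sum by (intro sum.cong refl) (auto simp: pdiff_single lookup_single)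
  with assms show ?thesis
    by (simp add: sum.delta')
qed

lemma mat_expansion:
  assumes "i \<in> Iset n" "j \<in> Iset n"
  shows "(\<Sum>b\<in>Iset n \<times> Iset n. mat_smult (M (fst b) (snd b)) (elem (fst b) (snd b))) i j = (M i j :: 'a::comm_ring_1)"
proof -
  have "(\<Sum>b\<in>Iset n \<times> Iset n. mat_smult (M (fst b) (snd b)) (elem (fst b) (snd b))) i j
      = (\<Sum>b\<in>Iset n \<times> Iset n. if b = (i, j) then M i j else 0)"
    unfolding sum_apply mat_smult_def elem_def by (intro sum.cong) auto
  with assms show ?thesis
    by (simp add: sum.delta')
qed

definition act_coeff :: "nat \<Rightarrow> (nat \<Rightarrow> nat) \<Rightarrow> 'a::comm_ring_1 mat \<Rightarrow> nat \<times> nat \<Rightarrow> 'a spoly" where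
  "act_coeff n iota x a = lin n (qbracket n iota x (elem (fst a) (snd a)))"

context
  fixes n :: nat and iota :: "nat \<Rightarrow> nat"
begin

lemma act_eq_vfield: "act n iota x f = vfield (Iset n \<times> Iset n) (act_coeff n iota x) f"
  by (simp add: act_def vfield_def act_coeff_def sum.cartesian_product case_prod_beta)

lemma act_lin: "act n iota x (lin n M) = lin n (qbracket n iota x (M::'a::comm_ring_1 mat))"
proof -
  let ?A = "Iset n \<times> Iset n"
  have "act n iota x (lin n M)
      = (\<Sum>b\<in>?A. lin n (mat_smult (M (fst b) (snd b)) (qbracket n iota x (elem (fst b) (snd b)))))"
    unfolding act_eq_vfield vfield_def
    by (intro sum.cong refl) (simp add: pdiff_lin lin_smult act_coeff_def mult.commute)
  also have "\<dots> = lin n (qbracket n iota x (\<Sum>b\<in>?A. mat_smult (M (fst b) (snd b)) (elem (fst b) (snd b))))"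
    by (simp add: lin_sum qbracket_sum_right qbracket_smult_right)
  also have "\<dots> = lin n (qbracket n iota x M)"
    by (intro lin_cong qbracket_cong) (simp_all add: mat_expansion)
  finally show ?thesis .
qed

text \<open>The coefficients of the commutator of the two derivations are computed by
  \<open>act_lin\<close>; the Jacobi identity of \<open>q\<close> identifies them with those of \<open>act [x, y]\<close>.\<close>

lemma act_commutator:
  "act n iota x (act n iota y f) - act n iota y (act n iota x f)
     = act n iota (qbracket n iota x y) (f::'a::comm_ring_1 spoly)"
proof -
  let ?A = "Iset n \<times> Iset n"
  have "vfield ?A (act_coeff n iota x) (act_coeff n iota y a) - vfield ?A (act_coeff n iota y) (act_coeff n iota x a)
      = act_coeff n iota (qbracket n iota x y) a" for a
    using act_lin[of x] act_lin[of y]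
    by (simp add: act_eq_vfield act_coeff_def flip: lin_diff qbracket_jacobi)
  then show ?thesis
    by (simp add: act_eq_vfield vfield_commutator)
qed

lemma act_const_mult: "act n iota x (Poly_Mapping.single 0 c * f) = Poly_Mapping.single 0 c * act n iota x f"
  by (simp add: act_eq_vfield vfield_const_mult)

lemma act_add_left: "act n iota (x + y) f = act n iota x f + act n iota y (f::'a::comm_ring_1 spoly)"
proof -
  have "act_coeff n iota (x + y) = (\<lambda>a. act_coeff n iota x a + act_coeff n iota y a)"
    by (simp add: fun_eq_iff act_coeff_def qbracket_add_left lin_add del: plus_fun_apply)
  then show ?thesis
    by (simp add: act_eq_vfield vfield_coeff_add)
qed

lemma act_smult_left: "act n iota (mat_smult c x) f = Poly_Mapping.single 0 c * act n iota x (f::'a::comm_ring_1 spoly)"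
  by (simp add: act_eq_vfield act_coeff_def qbracket_smult_left lin_smult vfield_def sum_distrib_left mult.assoc)

lemma act_cong:
  assumes "\<And>i j. i \<in> Iset n \<Longrightarrow> j \<in> Iset n \<Longrightarrow> x i j = y i j"
  shows "act n iota x f = act n iota y (f::'a::comm_ring_1 spoly)"
proof -
  have "act_coeff n iota x = act_coeff n iota y"
    unfolding act_coeff_def by (intro ext lin_cong qbracket_cong) (simp_all add: assms)
  then show ?thesis
    by (simp add: act_eq_vfield)
qed

end

section \<open>Weights of semi-invariants\<close>

text \<open>The weight of the monomial \<open>m\<close> for the diagonal element \<open>e\<^sub>u\<^sub>u\<close>: the variable
  \<open>e\<^sub>p\<^sub>q\<close> has weight \<open>\<delta>\<^sub>u\<^sub>p - \<delta>\<^sub>u\<^sub>q\<close>.\<close>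

definition monomial_weight :: "nat \<Rightarrow> ((nat \<times> nat) \<Rightarrow>\<^sub>0 nat) \<Rightarrow> nat \<Rightarrow> int" where
  "monomial_weight n m u =
     (\<Sum>a\<in>Iset n \<times> Iset n. (of_bool (fst a = u) - of_bool (snd a = u)) * int (Poly_Mapping.lookup m a))"

lemma sum_monomial_weight: "(\<Sum>u\<in>Iset n. monomial_weight n m u) = 0"
proof -
  have "(\<Sum>u\<in>Iset n. (of_bool (fst a = u) - of_bool (snd a = u)) * int (Poly_Mapping.lookup m a)) = 0"
    if "a \<in> Iset n \<times> Iset n" for a
    using that by (auto simp: sum_subtractf of_bool_def sum.delta sum.delta' simp flip: sum_distrib_right)
  then show ?thesis
    unfolding monomial_weight_def by (subst sum.swap) (simp add: sum.neutral)
qed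

lemma lookup_act_diag:
  assumes "u \<in> Iset n"
  shows "Poly_Mapping.lookup (act n iota (elem u u) f) m
       = of_int (monomial_weight n m u) * Poly_Mapping.lookup (f::'a::comm_ring_1 spoly) m"
proof -
  let ?c = "\<lambda>a. of_bool (fst a = u) - of_bool (snd a = u) :: 'a"
  have "act n iota (elem u u) f = (\<Sum>a\<in>Iset n \<times> Iset n.
      Poly_Mapping.single 0 (?c a) * (Poly_Mapping.single (Poly_Mapping.single a 1) 1 * pdiff a f))"
    unfolding act_eq_vfield vfield_def
  proof (intro sum.cong refl)
    fix a assume a: "a \<in> Iset n \<times> Iset n"
    have "act_coeff n iota (elem u u) a = lin n (mat_smult (?c a) (elem (fst a) (snd a)))"
      using a assms unfolding act_coeff_def by (intro lin_cong) (auto simp: qbracket_diag_elem mat_smult_def)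
    also have "\<dots> = Poly_Mapping.single 0 (?c a) * Poly_Mapping.single (Poly_Mapping.single a 1) 1"
      using a by (simp add: lin_smult lin_elem mem_Times_iff)
    finally show "act_coeff n iota (elem u u) a * pdiff a f
        = Poly_Mapping.single 0 (?c a) * (Poly_Mapping.single (Poly_Mapping.single a 1) 1 * pdiff a f)"
      by (simp only: mult.assoc)
  qed
  then show ?thesis
    by (simp add: monomial_weight_def lookup_sum lookup_const_mult lookup_var_mult_pdiff[unfolded One_nat_def]
        sum_distrib_right mult.assoc of_int_sum)
qed

locale weight_vector =
  fixes n :: nat and iota :: "nat \<Rightarrow> nat" and f :: "'a::field spoly" and lam :: "'a mat \<Rightarrow> 'a"
  assumes act_eq: "\<And>x. act n iota x f = Poly_Mapping.single 0 (lam x) * f"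
    and nonzero: "f \<noteq> 0"
begin

lemma weight_eqI:
  assumes "act n iota x f = Poly_Mapping.single 0 c * f"
  shows "lam x = c"
proof -
  have "Poly_Mapping.single 0 (lam x - c) * f = 0"
    using assms act_eq[of x] by (simp add: single_diff left_diff_distrib)
  then show ?thesis
    using const_mult_eq_0_iff[OF nonzero] by simp
qed

lemma weight_qbracket: "lam (qbracket n iota x y) = 0"
proof (rule weight_eqI)
  have "act n iota (qbracket n iota x y) f = act n iota x (act n iota y f) - act n iota y (act n iota x f)"
    by (simp add: act_commutator)
  also have "\<dots> = 0"
    by (simp only: act_eq act_const_mult mult.assoc[symmetric] mult_single add_0 mult.commute[of "lam x"] diff_self)
  finally show "act n iota (qbracket n iota x y) f = Poly_Mapping.single 0 0 * f"
    by simp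
qed

lemma weight_add: "lam (x + y) = lam x + lam y"
  by (rule weight_eqI) (simp only: act_add_left act_eq single_add distrib_right)

lemma weight_smult: "lam (mat_smult c x) = c * lam x"
  by (rule weight_eqI) (simp add: act_smult_left act_eq mult_single flip: mult.assoc)

lemma weight_cong:
  assumes "\<And>i j. i \<in> Iset n \<Longrightarrow> j \<in> Iset n \<Longrightarrow> x i j = y i j"
  shows "lam x = lam y"
proof (rule weight_eqI)
  show "act n iota x f = Poly_Mapping.single 0 (lam y) * f"
    using act_cong[of n x y iota f] assms by (simp add: act_eq)
qed

lemma weight_zero: "lam 0 = 0"
  using weight_add[of 0 0] by (metis add_left_cancel add.right_neutral)

lemma weight_sum: "lam (\<Sum>b\<in>S. F b) = (\<Sum>b\<in>S. lam (F b))"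
  by (induction S rule: infinite_finite_induct) (simp_all add: weight_zero weight_add del: plus_fun_apply zero_fun_apply)

lemma weight_expansion: "lam x = (\<Sum>p\<in>Iset n. \<Sum>q\<in>Iset n. x p q * lam (elem p q))"
proof -
  have "lam x = lam (\<Sum>b\<in>Iset n \<times> Iset n. mat_smult (x (fst b) (snd b)) (elem (fst b) (snd b)))"
    by (rule weight_cong) (simp add: mat_expansion)
  then show ?thesis
    by (simp add: weight_sum weight_smult sum.cartesian_product case_prod_beta)
qed

lemma weight_elem_offdiag:
  assumes "p \<noteq> q" "p \<in> Iset n" "q \<in> Iset n"
  shows "lam (elem p q) = 0"
proof -
  have "lam (elem p q) = lam (qbracket n iota (elem p p) (elem p q))"
    by (rule weight_cong) (simp add: qbracket_diag_elem assms)
  then show ?thesis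
    by (simp add: weight_qbracket)
qed

lemma weight_elem_diag_block:
  assumes "u \<in> Iset n" "v \<in> Iset n" "blk iota u = blk iota v"
  shows "lam (elem u u) = lam (elem v v)"
proof (cases "u = v")
  case False
  have "lam (elem u u) = lam (qbracket n iota (elem u v) (elem v u) + elem v v)"
    by (rule weight_cong) (simp add: qbracket_elem_elem_swap assms False)
  then show ?thesis
    by (simp add: weight_add weight_qbracket)
qed simp

lemma weight_elem_diag:
  assumes "m \<in> Poly_Mapping.keys f" "u \<in> Iset n"
  shows "lam (elem u u) = of_int (monomial_weight n m u)"
proof -
  have "lam (elem u u) * Poly_Mapping.lookup f m = of_int (monomial_weight n m u) * Poly_Mapping.lookup f m"
    using lookup_act_diag[OF assms(2), of iota f m] by (simp add: act_eq lookup_const_mult)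
  with assms(1) show ?thesis
    by (simp add: in_keys_iff)
qed

lemma weight_eq_diag_sum:
  assumes "m \<in> Poly_Mapping.keys f"
  shows "lam x = (\<Sum>u\<in>Iset n. x u u * of_int (monomial_weight n m u))"
proof -
  have "(\<Sum>q\<in>Iset n. x p q * lam (elem p q)) = x p p * of_int (monomial_weight n m p)" if "p \<in> Iset n" for p
  proof -
    have "(\<Sum>q\<in>Iset n. x p q * lam (elem p q)) = (\<Sum>q\<in>Iset n. if q = p then x p p * lam (elem p p) else 0)"
      using that by (intro sum.cong refl) (auto simp: weight_elem_offdiag)
    with that show ?thesis
      by (simp add: weight_elem_diag[OF assms])
  qed
  then show ?thesis
    by (simp add: weight_expansion[of x])
qed

end

section \<open>Integral combinations of fundamental weights\<close>

lemma summation_by_parts: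
  fixes mu d :: "nat \<Rightarrow> 'a::comm_ring_1"
  shows "(\<Sum>l=1..N. (mu l - mu (Suc l)) * (\<Sum>u=1..l. d u))
       = (\<Sum>u=1..N. d u * mu u) - mu (Suc N) * (\<Sum>u=1..N. d u)"
  by (induction N) (simp_all add: sum.cl_ivl_Suc algebra_simps)

lemma varpi_self [simp]: "varpi n n x = 0"
  by (cases "n = 0") (simp_all add: varpi_def Iset_def)

lemma diag_sum_eq_varpi_sum:
  fixes mu :: "nat \<Rightarrow> 'a::field_char_0" and x :: "'a mat"
  assumes "(\<Sum>u\<in>Iset n. mu u) = 0"
  shows "(\<Sum>u\<in>Iset n. x u u * mu u) = (\<Sum>l=1..n-1. (mu l - mu (Suc l)) * varpi n l x)"
proof (cases "n = 0")
  case False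
  let ?d = "\<lambda>l. mu l - mu (Suc l)"
  let ?T = "\<Sum>u=1..n. x u u"
  have varpi_eq: "varpi n l x = (\<Sum>u=1..l. x u u) - ?T / of_nat n * of_nat l" for l
    by (simp add: varpi_def Iset_def)
  have "(\<Sum>l=1..n-1. ?d l * varpi n l x) = (\<Sum>l=1..n. ?d l * varpi n l x)"
    using False by (cases n) (simp_all add: sum.cl_ivl_Suc)
  also have "\<dots> = (\<Sum>l=1..n. ?d l * (\<Sum>u=1..l. x u u) - ?T / of_nat n * (?d l * of_nat l))"
    by (intro sum.cong refl) (simp add: varpi_eq algebra_simps)
  also have "\<dots> = (\<Sum>l=1..n. ?d l * (\<Sum>u=1..l. x u u)) - ?T / of_nat n * (\<Sum>l=1..n. ?d l * of_nat l)"
    by (simp only: sum_subtractf sum_distrib_left)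
  also have "\<dots> = (\<Sum>u=1..n. x u u * mu u) - mu (Suc n) * ?T - ?T / of_nat n * (- mu (Suc n) * of_nat n)"
    using assms summation_by_parts[of mu "\<lambda>_. 1" n] summation_by_parts[of mu "\<lambda>u. x u u" n]
    by (simp add: Iset_def)
  also have "\<dots> = (\<Sum>u=1..n. x u u * mu u)"
    using False by simp
  finally show ?thesis
    by (simp add: Iset_def)
qed (simp add: Iset_def)

lemma blk_Suc_eq:
  assumes "iota 0 = 0" "iota s = n" "l \<in> {1..n-1}" "l \<notin> iota ` {1..s-1}"
  shows "blk iota (Suc l) = blk iota l"
proof -
  let ?k = "blk iota l"
  have "Suc l \<le> iota s"
    using assms(2,3) by auto
  then have le_k: "l \<le> iota ?k" and k_le: "?k \<le> s" and Suc_le: "Suc l \<le> iota (blk iota (Suc l))"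
    unfolding blk_def by (auto intro: LeastI[of _ s] Least_le)
  have "l \<noteq> iota ?k"
  proof
    assume l: "l = iota ?k"
    have "iota ?k \<noteq> iota 0" "iota ?k \<noteq> iota s"
      using l[symmetric] assms(1-3) by auto
    then have "?k \<noteq> 0" "?k \<noteq> s"
      by metis+
    then have "?k \<in> {1..s-1}"
      using k_le by auto
    with l assms(4) show False
      by blast
  qed
  then have "blk iota (Suc l) \<le> ?k"
    using le_k unfolding blk_def by (intro Least_le) simp
  moreover have "?k \<le> blk iota (Suc l)"
    using Suc_le unfolding blk_def by (intro Least_le) simp
  ultimately show ?thesis
    by simp
qed

lemma strict_mono_on_atMost:
  fixes f :: "nat \<Rightarrow> 'a::order"
  assumes "\<And>k. k < s \<Longrightarrow> f k < f (Suc k)"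
  shows "strict_mono_on {..s} f"
proof (rule strict_mono_onI)
  fix i j assume ij: "i \<in> {..s}" "j \<in> {..s}" "i < j"
  show "f i < f j"
    by (rule lift_Suc_mono_less_ivl[where N = "{..<s}"]) (use assms ij in auto)
qed

lemma diag_sum_in_varpi_span:
  fixes w :: "nat \<Rightarrow> int"
  assumes "iota 0 = 0" "iota s = n" "\<And>k. k < s \<Longrightarrow> iota k < iota (Suc k)"
    and "(\<Sum>u\<in>Iset n. w u) = 0"
    and "\<And>u v. u \<in> Iset n \<Longrightarrow> v \<in> Iset n \<Longrightarrow> blk iota u = blk iota v \<Longrightarrow> w u = w v"
  shows "\<exists>c :: nat \<Rightarrow> int. \<forall>x :: 'a::field_char_0 mat.
           (\<Sum>u\<in>Iset n. x u u * of_int (w u)) = (\<Sum>k\<in>{1..s-1}. of_int (c k) * varpi n (iota k) x)"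
proof (intro exI[of _ "\<lambda>k. w (iota k) - w (Suc (iota k))"] allI)
  fix x :: "'a mat"
  let ?d = "\<lambda>l. w l - w (Suc l)"
  have mono: "strict_mono_on {..s} iota"
    using assms(3) by (rule strict_mono_on_atMost)
  have "iota 0 < iota k" "iota k < iota s" if "k \<in> {1..s-1}" for k
    using that by (auto intro!: strict_mono_onD[OF mono])
  then have range: "iota ` {1..s-1} \<subseteq> {1..n-1}"
    using assms(1,2) by fastforce
  have inj: "inj_on iota {1..s-1}"
    by (rule inj_on_subset[OF strict_mono_on_imp_inj_on[OF mono]]) auto
  have "(\<Sum>u\<in>Iset n. x u u * of_int (w u)) = (\<Sum>l=1..n-1. of_int (?d l) * varpi n l x)"
    using diag_sum_eq_varpi_sum[of "\<lambda>u. of_int (w u)" n x] assms(4) by (simp flip: of_int_sum)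
  also have "\<dots> = (\<Sum>l\<in>iota ` {1..s-1}. of_int (?d l) * varpi n l x)"
  proof (rule sum.mono_neutral_right)
    show "\<forall>l\<in>{1..n-1} - iota ` {1..s-1}. of_int (?d l) * varpi n l x = 0"
      using blk_Suc_eq[OF assms(1,2)] assms(5) by (auto simp: Iset_def)
  qed (use range in auto)
  also have "\<dots> = (\<Sum>k\<in>{1..s-1}. of_int (?d (iota k)) * varpi n (iota k) x)"
    by (subst sum.reindex[OF inj]) simp
  finally show "(\<Sum>u\<in>Iset n. x u u * of_int (w u))
      = (\<Sum>k\<in>{1..s-1}. of_int (?d (iota k)) * varpi n (iota k) x)" .
qed

theorem mainTheorem6:
  fixes n s :: nat and iota :: "nat \<Rightarrow> nat"
  assumes "n \<ge> 2" and "s \<ge> 2"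
    and "iota 0 = 0" and "iota s = n"
    and "\<And>k. k < s \<Longrightarrow> iota k < iota (Suc k)"
    and "lam \<in> (weights n iota :: ('a::{alg_closed_field, field_char_0} mat \<Rightarrow> 'a) set)"
  shows "\<exists>c :: nat \<Rightarrow> int. \<forall>x.
           lam x = (\<Sum>k\<in>{1..s-1}. of_int (c k) * varpi n (iota k) x)"
proof -
  from assms(6) obtain f where "semi_invariant n iota f lam"
    by (auto simp: weights_def)
  then interpret weight_vector n iota f lam
    by unfold_locales (auto simp: semi_invariant_def)
  obtain m where m: "m \<in> Poly_Mapping.keys f"
    using nonzero by fastforce
  have "monomial_weight n m u = monomial_weight n m v"
    if "u \<in> Iset n" "v \<in> Iset n" "blk iota u = blk iota v" for u v
    using weight_elem_diag_block[OF that] weight_elem_diag[OF m that(1)] weight_elem_diag[OF m that(2)]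
    by simp
  then obtain c :: "nat \<Rightarrow> int" where c:
    "\<And>x :: 'a mat. (\<Sum>u\<in>Iset n. x u u * of_int (monomial_weight n m u)) = (\<Sum>k\<in>{1..s-1}. of_int (c k) * varpi n (iota k) x)"
    using diag_sum_in_varpi_span[OF assms(3-5) sum_monomial_weight] by blast
  show ?thesis
    by (intro exI[of _ c] allI) (simp only: weight_eq_diag_sum[OF m] c)
qed

end
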